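(* Let $A=(a_1,\ldots,a_q)\in\mathbb{R}^{p\times q}$ be entrywise nonnegative, $\eta_1,\eta_2>0$, $\gamma>0$, $\mathcal{C}=\{(W,X)\in\mathbb{R}^{p\times n}\times\mathbb{R}^{n\times q}\mid W\ge0,\ X\ge0\}$ (entrywise), and let $(W^*,X^* )$ be a d-stationary point of $$\min_{W,X}\ \tfrac12\|A-WX\|_F^2+\tfrac{\eta_1}{2}\|W\|_F^2+\tfrac{\eta_2}{2}\|X\|_F^2+\gamma\sum_{j\in[q]}T_{1,n,1}(x_j)+\delta_{\mathcal C}(W,X),$$ where $x_j$ is the $j$-th column of $X$. If $$\gamma>\max_{j\in[q]}\frac{\|a_j\|_2}{\sqrt2}\Big(\frac{\|A\|_F}{\sqrt{\eta_1}}+\sqrt{\eta_2}\Big),$$ then $T_{1,n,1}(x_j^* )=0$ (i.e., $x_j^*$ has at most one nonzero entry) for all $j\in[q]$.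
   Context: $T_{1,n,1}(x)$ is the sum of the $n-1$ smallest values among $|x_1|,\ldots,|x_n|$. $\delta_{\mathcal C}$ is the indicator function of $\mathcal C$. Feasible cone $\mathcal{F}(z;\mathcal{C})=\{d\mid \exists\varsigma'>0:\ z+\varsigma d\in\mathcal{C}\ \forall\varsigma\in(0,\varsigma')\}$. A point of $\mathcal C$ is d-stationary if the directional derivative of the objective there is $\ge0$ in every direction of $\mathcal{F}(\cdot;\mathcal{C})$. *)

theory Defs
  imports "HOL-Analysis.Analysis"
begin

text \<open>Matrices are represented as functions nat => nat => real, with entries
 meaningful only for indices below the given dimensions.\<close>

type_synonym mat = "nat \<Rightarrow> nat \<Rightarrow> real"

definition T1n1 :: "nat \<Rightarrow> (nat \<Rightarrow> real) \<Rightarrow> real" where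
  "T1n1 n x = sum_list (take (n - 1) (sort (map (\<lambda>i. \<bar>x i\<bar>) [0..<n])))"

definition frob :: "nat \<Rightarrow> nat \<Rightarrow> mat \<Rightarrow> real" where
  "frob r c M = sqrt (\<Sum>i<r. \<Sum>j<c. (M i j)\<^sup>2)"

definition colnorm :: "nat \<Rightarrow> mat \<Rightarrow> nat \<Rightarrow> real" where
  "colnorm r M j = sqrt (\<Sum>i<r. (M i j)\<^sup>2)"

definition matmul :: "nat \<Rightarrow> mat \<Rightarrow> mat \<Rightarrow> mat" where
  "matmul n W X = (\<lambda>i j. \<Sum>k<n. W i k * X k j)"

text \<open>Finite-valued part of the objective (everything except the indicator of C).\<close>
definition objF :: "nat \<Rightarrow> nat \<Rightarrow> nat \<Rightarrow> mat \<Rightarrow> real \<Rightarrow> real \<Rightarrow> real \<Rightarrow> mat \<times> mat \<Rightarrow> real" where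
  "objF p n q A \<eta>1 \<eta>2 \<gamma> z =
     (let W = fst z; X = snd z;
          R = (\<lambda>i j. A i j - matmul n W X i j) in
      (frob p q R)\<^sup>2 / 2 + \<eta>1 / 2 * (frob p n W)\<^sup>2 + \<eta>2 / 2 * (frob n q X)\<^sup>2
      + \<gamma> * (\<Sum>j<q. T1n1 n (\<lambda>k. X k j)))"

definition consC :: "nat \<Rightarrow> nat \<Rightarrow> nat \<Rightarrow> (mat \<times> mat) set" where
  "consC p n q = {(W, X). (\<forall>i<p. \<forall>k<n. W i k \<ge> 0) \<and> (\<forall>k<n. \<forall>j<q. X k j \<ge> 0)}"

definition zstep :: "mat \<times> mat \<Rightarrow> real \<Rightarrow> mat \<times> mat \<Rightarrow> mat \<times> mat" where
  "zstep z s d = ((\<lambda>i k. fst z i k + s * fst d i k), (\<lambda>k j. snd z k j + s * snd d k j))"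

definition feas_cone :: "(mat \<times> mat) set \<Rightarrow> mat \<times> mat \<Rightarrow> (mat \<times> mat) set" where
  "feas_cone C z = {d. \<exists>s'>0. \<forall>s. 0 < s \<and> s < s' \<longrightarrow> zstep z s d \<in> C}"

definition has_dirderiv :: "(mat \<times> mat \<Rightarrow> real) \<Rightarrow> mat \<times> mat \<Rightarrow> mat \<times> mat \<Rightarrow> real \<Rightarrow> bool" where
  "has_dirderiv f z d D \<longleftrightarrow> ((\<lambda>s. (f (zstep z s d) - f z) / s) \<longlongrightarrow> D) (at_right 0)"

text \<open>Along d in F(z;C) the indicator is 0
 for all small s > 0 (and at z), so the directional derivative of f + indicator(C)
 coincides with that of f.\<close>
definition d_stationary :: "(mat \<times> mat \<Rightarrow> real) \<Rightarrow> (mat \<times> mat) set \<Rightarrow> mat \<times> mat \<Rightarrow> bool" where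
  "d_stationary f C z \<longleftrightarrow> z \<in> C \<and>
     (\<forall>d \<in> feas_cone C z. \<exists>D. has_dirderiv f z d D \<and> D \<ge> 0)"

end

theory Submission
  imports Defs
begin

text \<open>Two first-order conditions at the d-stationary point (W, X) suffice. Scaling W by
  1 - s is feasible and leaves the penalty unchanged, so stationarity gives
  \<eta>1 \<parallel>W\<parallel>^2 \<le> \<langle>A - WX, WX\<rangle> \<le> \<parallel>A\<parallel>^2/4.
  If T_{1,n,1}(x_j) \<noteq> 0, some entry X_kj > 0 is not of maximal modulus in its column;
  lowering it is feasible and lowers T_{1,n,1}(x_j) at unit rate, so stationarity gives
  \<gamma> \<le> \<langle>a_j - (WX)_j, w_k\<rangle> \<le> \<parallel>a_j\<parallel> \<parallel>w_k\<parallel> \<le> \<parallel>a_j\<parallel> \<parallel>A\<parallel>_F / (2 \<surd>\<eta>1),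
  which the assumed lower bound on \<gamma> excludes.\<close>

lemma sorted_le_last: "sorted xs \<Longrightarrow> y \<in> set xs \<Longrightarrow> y \<le> last xs"
  by (induction xs rule: induct_list012) auto

lemma T1n1_eq_sum_minus_Max:
  assumes "n \<ge> 1"
  shows "T1n1 n x = (\<Sum>i<n. \<bar>x i\<bar>) - Max ((\<lambda>i. \<bar>x i\<bar>) ` {..<n})"
proof -
  define S where "S = sort (map (\<lambda>i. \<bar>x i\<bar>) [0..<n])"
  have "S \<noteq> []" using assms by (simp add: S_def flip: length_0_conv)
  hence S_split: "S = take (n - 1) S @ [last S]"
    by (metis S_def append_butlast_last_id butlast_conv_take length_map length_sort length_upt
        minus_nat.diff_0)
  have "sum_list S = sum_list (map (\<lambda>i. \<bar>x i\<bar>) [0..<n])"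
    by (metis S_def mset_sort sum_mset_sum_list)
  also have "\<dots> = (\<Sum>i<n. \<bar>x i\<bar>)"
    by (simp add: sum_list_distinct_conv_sum_set atLeast0LessThan)
  finally have "sum_list S = (\<Sum>i<n. \<bar>x i\<bar>)" .
  hence "sum_list (take (n - 1) S) = (\<Sum>i<n. \<bar>x i\<bar>) - last S"
    by (subst (asm) S_split) simp
  moreover have "last S = Max ((\<lambda>i. \<bar>x i\<bar>) ` {..<n})"
  proof (rule sym, rule Max_eqI)
    show "last S \<in> (\<lambda>i. \<bar>x i\<bar>) ` {..<n}"
      using \<open>S \<noteq> []\<close> last_in_set by (fastforce simp: S_def)
  qed (auto simp: S_def intro: sorted_le_last)
  ultimately show ?thesis by (simp add: T1n1_def S_def)
qed

lemma T1n1_nonzero_obtain: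
  assumes "T1n1 n x \<noteq> 0"
  obtains m k where "m < n" "k < n" "m \<noteq> k"
    "\<bar>x m\<bar> = Max ((\<lambda>i. \<bar>x i\<bar>) ` {..<n})" "x k \<noteq> 0"
proof -
  have "n \<ge> 1" using assms by (cases n) (auto simp: T1n1_def)
  hence "Max ((\<lambda>i. \<bar>x i\<bar>) ` {..<n}) \<in> (\<lambda>i. \<bar>x i\<bar>) ` {..<n}"
    by (intro Max_in) (auto simp: lessThan_empty_iff)
  then obtain m where m: "m < n" "\<bar>x m\<bar> = Max ((\<lambda>i. \<bar>x i\<bar>) ` {..<n})" by auto
  with \<open>n \<ge> 1\<close> have "T1n1 n x = (\<Sum>i\<in>{..<n} - {m}. \<bar>x i\<bar>)"
    by (simp add: T1n1_eq_sum_minus_Max sum.remove)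
  with assms obtain k where "k \<in> {..<n} - {m}" "x k \<noteq> 0"
    by (metis (mono_tags) abs_0 sum.neutral)
  with m that show thesis by auto
qed

lemma T1n1_decrease_nonmax:
  assumes "m < n" "k < n" "m \<noteq> k" "\<bar>x m\<bar> = Max ((\<lambda>i. \<bar>x i\<bar>) ` {..<n})"
    and "0 \<le> s" "s \<le> x k"
  shows "T1n1 n (x(k := x k - s)) = T1n1 n x - s"
proof -
  define y where "y = x(k := x k - s)"
  have abs_y: "\<bar>y i\<bar> = \<bar>x i\<bar> - (if i = k then s else 0)" for i
    using assms(5,6) by (simp add: y_def)
  have "Max ((\<lambda>i. \<bar>y i\<bar>) ` {..<n}) = Max ((\<lambda>i. \<bar>x i\<bar>) ` {..<n})"
  proof (rule Max_eqI)
    show "a \<le> Max ((\<lambda>i. \<bar>x i\<bar>) ` {..<n})" if a: "a \<in> (\<lambda>i. \<bar>y i\<bar>) ` {..<n}" for a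
    proof -
      obtain i where "i < n" "a = \<bar>y i\<bar>" using a by auto
      hence "a \<le> \<bar>x i\<bar>" using abs_y[of i] assms(5) by simp
      also have "\<dots> \<le> Max ((\<lambda>i. \<bar>x i\<bar>) ` {..<n})" using \<open>i < n\<close> by (intro Max_ge) auto
      finally show ?thesis .
    qed
    show "Max ((\<lambda>i. \<bar>x i\<bar>) ` {..<n}) \<in> (\<lambda>i. \<bar>y i\<bar>) ` {..<n}"
      using assms(1,3,4) by (force simp: y_def)
  qed simp
  moreover have "(\<Sum>i<n. \<bar>y i\<bar>) = (\<Sum>i<n. \<bar>x i\<bar>) - s"
    using assms(2) by (simp add: abs_y sum_subtractf)
  ultimately show ?thesis
    using assms(1) by (simp add: T1n1_eq_sum_minus_Max flip: y_def)
qed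

definition frob_inner :: "nat \<Rightarrow> nat \<Rightarrow> mat \<Rightarrow> mat \<Rightarrow> real" where
  "frob_inner r c M N = (\<Sum>i<r. \<Sum>j<c. M i j * N i j)"

lemma frob_sq: "(frob r c M)\<^sup>2 = (\<Sum>i<r. \<Sum>j<c. (M i j)\<^sup>2)"
  by (simp add: frob_def sum_nonneg)

lemma frob_sq_add_scaled:
  "(frob r c (\<lambda>i j. M i j + s * N i j))\<^sup>2
     = (frob r c M)\<^sup>2 + 2 * s * frob_inner r c M N + s\<^sup>2 * (frob r c N)\<^sup>2"
  unfolding frob_sq frob_inner_def
  by (simp add: power2_eq_square algebra_simps sum.distrib sum_distrib_left)

lemma frob_zero [simp]: "frob r c (\<lambda>i j. 0) = 0"
  by (simp add: frob_def)

lemma frob_neg: "frob r c (\<lambda>i j. - M i j) = frob r c M"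
  by (simp add: frob_def)

lemma frob_inner_zero_right [simp]: "frob_inner r c M (\<lambda>i j. 0) = 0"
  by (simp add: frob_inner_def)

lemma frob_inner_neg_right: "frob_inner r c M (\<lambda>i j. - M i j) = - (frob r c M)\<^sup>2"
  unfolding frob_inner_def frob_sq by (simp add: power2_eq_square sum_negf)

lemma frob_inner_column:
  "j < c \<Longrightarrow> frob_inner r c M (\<lambda>i j'. if j' = j then v i else 0) = (\<Sum>i<r. M i j * v i)"
  by (simp add: frob_inner_def if_distrib[of "(*) _"] cong: if_cong)

lemma frob_sq_column:
  "j < c \<Longrightarrow> (frob r c (\<lambda>i j'. if j' = j then v i else 0))\<^sup>2 = (\<Sum>i<r. (v i)\<^sup>2)"
  by (simp add: frob_sq if_distrib[of "\<lambda>x. x\<^sup>2"] cong: if_cong)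

lemma frob_inner_le_quarter_frob_sq:
  "frob_inner r c (\<lambda>i j. A i j - P i j) P \<le> (frob r c A)\<^sup>2 / 4"
proof -
  have "(A i j - P i j) * P i j \<le> (A i j)\<^sup>2 / 4" for i j
    using zero_le_power2[of "A i j - 2 * P i j"] by (simp add: power2_eq_square algebra_simps)
  hence "frob_inner r c (\<lambda>i j. A i j - P i j) P \<le> (\<Sum>i<r. \<Sum>j<c. (A i j)\<^sup>2 / 4)"
    unfolding frob_inner_def by (intro sum_mono)
  thus ?thesis by (simp add: frob_sq sum_divide_distrib)
qed

lemma colnorm_le_frob:
  assumes "k < c"
  shows "colnorm r M k \<le> frob r c M"
proof -
  have "(\<Sum>i<r. (M i k)\<^sup>2) \<le> (\<Sum>i<r. \<Sum>j<c. (M i j)\<^sup>2)"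
    using assms by (intro sum_mono member_le_sum) auto
  thus ?thesis by (simp add: colnorm_def frob_def)
qed

lemma sum_mult_le_colnorm: "(\<Sum>i<r. M i j * N i k) \<le> colnorm r M j * colnorm r N k"
proof -
  have "(\<Sum>i<r. M i j * N i k) \<le> (\<Sum>i<r. \<bar>M i j\<bar> * \<bar>N i k\<bar>)"
    by (intro sum_mono) (simp add: abs_mult[symmetric])
  also have "\<dots> \<le> colnorm r M j * colnorm r N k"
    using L2_set_mult_ineq[of "\<lambda>i. M i j" "\<lambda>i. N i k" "{..<r}"]
    by (simp add: colnorm_def L2_set_def)
  finally show ?thesis .
qed

lemma d_stationary_first_order:
  assumes "d_stationary f C z" "d \<in> feas_cone C z" "e > 0"
    and "\<forall>s. 0 < s \<and> s < e \<longrightarrow> f (zstep z s d) - f z \<le> s * (a + s * b)"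
  shows "0 \<le> a"
proof -
  obtain D where D: "has_dirderiv f z d D" "D \<ge> 0"
    using assms(1,2) unfolding d_stationary_def by blast
  have "eventually (\<lambda>s. (f (zstep z s d) - f z) / s \<le> a + s * b) (at_right 0)"
    unfolding eventually_at_right_field
    using assms(3,4) by (auto intro!: exI[of _ e] simp: divide_le_eq mult.commute)
  moreover have "((\<lambda>s. a + s * b) \<longlongrightarrow> a) (at_right 0)"
    by (auto intro!: tendsto_eq_intros)
  ultimately have "D \<le> a"
    using D(1) unfolding has_dirderiv_def by (intro tendsto_le[OF trivial_limit_at_right_real])
  with D(2) show ?thesis by simp
qed

lemma objF_zstep:
  assumes "\<And>i j. matmul n (\<lambda>i k. W i k + s * dW i k) (\<lambda>k j. X k j + s * dX k j) i j
                   = matmul n W X i j - s * N i j"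
  shows "objF p n q A \<eta>1 \<eta>2 \<gamma> (zstep (W, X) s (dW, dX)) - objF p n q A \<eta>1 \<eta>2 \<gamma> (W, X)
    = s * (frob_inner p q (\<lambda>i j. A i j - matmul n W X i j) N
           + \<eta>1 * frob_inner p n W dW + \<eta>2 * frob_inner n q X dX
           + s / 2 * ((frob p q N)\<^sup>2 + \<eta>1 * (frob p n dW)\<^sup>2 + \<eta>2 * (frob n q dX)\<^sup>2))
      + \<gamma> * ((\<Sum>j<q. T1n1 n (\<lambda>k. X k j + s * dX k j)) - (\<Sum>j<q. T1n1 n (\<lambda>k. X k j)))"
proof -
  define R where "R = (\<lambda>i j. A i j - matmul n W X i j)"
  have residual: "(\<lambda>i j. A i j - matmul n (\<lambda>i k. W i k + s * dW i k) (\<lambda>k j. X k j + s * dX k j) i j)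
      = (\<lambda>i j. R i j + s * N i j)"
    by (simp add: assms R_def algebra_simps)
  have "objF p n q A \<eta>1 \<eta>2 \<gamma> (zstep (W, X) s (dW, dX))
      = ((frob p q R)\<^sup>2 + 2 * s * frob_inner p q R N + s\<^sup>2 * (frob p q N)\<^sup>2) / 2
        + \<eta>1 / 2 * ((frob p n W)\<^sup>2 + 2 * s * frob_inner p n W dW + s\<^sup>2 * (frob p n dW)\<^sup>2)
        + \<eta>2 / 2 * ((frob n q X)\<^sup>2 + 2 * s * frob_inner n q X dX + s\<^sup>2 * (frob n q dX)\<^sup>2)
        + \<gamma> * (\<Sum>j<q. T1n1 n (\<lambda>k. X k j + s * dX k j))"
    unfolding objF_def zstep_def Let_def fst_conv snd_conv residual frob_sq_add_scaled ..
  moreover have "objF p n q A \<eta>1 \<eta>2 \<gamma> (W, X)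
      = (frob p q R)\<^sup>2 / 2 + \<eta>1 / 2 * (frob p n W)\<^sup>2 + \<eta>2 / 2 * (frob n q X)\<^sup>2
        + \<gamma> * (\<Sum>j<q. T1n1 n (\<lambda>k. X k j))"
    by (simp add: objF_def R_def)
  ultimately show ?thesis
    unfolding R_def[symmetric] by (simp add: power2_eq_square field_simps)
qed

lemma d_stationary_shrink_W:
  assumes stat: "d_stationary (objF p n q A \<eta>1 \<eta>2 \<gamma>) (consC p n q) (W, X)"
  shows "\<eta>1 * (frob p n W)\<^sup>2 \<le> frob_inner p q (\<lambda>i j. A i j - matmul n W X i j) (matmul n W X)"
proof -
  define P where "P = matmul n W X"
  define d :: "mat \<times> mat" where "d = ((\<lambda>i k. - W i k), (\<lambda>k j. 0))"
  have "(W, X) \<in> consC p n q" using stat by (simp add: d_stationary_def)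
  hence "d \<in> feas_cone (consC p n q) (W, X)"
    by (auto simp: feas_cone_def consC_def zstep_def d_def intro!: exI[of _ 1] mult_left_le_one_le)
  moreover have "matmul n (\<lambda>i k. W i k + s * - W i k) (\<lambda>k j. X k j + s * 0) i j = P i j - s * P i j"
    for s i j
    by (simp add: P_def matmul_def algebra_simps sum_subtractf sum_distrib_left)
  hence "objF p n q A \<eta>1 \<eta>2 \<gamma> (zstep (W, X) s d) - objF p n q A \<eta>1 \<eta>2 \<gamma> (W, X)
      = s * ((frob_inner p q (\<lambda>i j. A i j - P i j) P - \<eta>1 * (frob p n W)\<^sup>2)
             + s * (((frob p q P)\<^sup>2 + \<eta>1 * (frob p n W)\<^sup>2) / 2))" for s
    unfolding d_def
    by (subst objF_zstep[where N = P])
       (simp_all add: P_def frob_inner_neg_right frob_neg algebra_simps)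
  ultimately have "0 \<le> frob_inner p q (\<lambda>i j. A i j - P i j) P - \<eta>1 * (frob p n W)\<^sup>2"
    by (intro d_stationary_first_order[OF stat, where d = d and e = 1
          and b = "((frob p q P)\<^sup>2 + \<eta>1 * (frob p n W)\<^sup>2) / 2"]) auto
  thus ?thesis by (simp add: P_def)
qed

lemma d_stationary_frob_W_le:
  assumes "\<eta>1 > 0" "d_stationary (objF p n q A \<eta>1 \<eta>2 \<gamma>) (consC p n q) (W, X)"
  shows "frob p n W \<le> frob p q A / (2 * sqrt \<eta>1)"
proof -
  have "\<eta>1 * (frob p n W)\<^sup>2 \<le> (frob p q A)\<^sup>2 / 4"
    using d_stationary_shrink_W[OF assms(2)] frob_inner_le_quarter_frob_sq by (rule order_trans)
  hence "(frob p n W)\<^sup>2 \<le> (frob p q A / (2 * sqrt \<eta>1))\<^sup>2"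
    using assms(1) by (simp add: power_divide power_mult_distrib field_simps)
  thus ?thesis
    by (rule power2_le_imp_le)
       (intro divide_nonneg_nonneg; simp add: frob_def sum_nonneg less_imp_le assms(1))
qed

lemma d_stationary_lower_entry:
  assumes stat: "d_stationary (objF p n q A \<eta>1 \<eta>2 \<gamma>) (consC p n q) (W, X)"
    and "j < q" "m < n" "k < n" "m \<noteq> k" "\<bar>X m j\<bar> = Max ((\<lambda>i. \<bar>X i j\<bar>) ` {..<n})"
    and "X k j > 0"
  shows "\<gamma> + \<eta>2 * X k j \<le> (\<Sum>i<p. (A i j - matmul n W X i j) * W i k)"
proof -
  define E :: mat where "E = (\<lambda>k' j'. if j' = j then if k' = k then -1 else 0 else 0)"
  define N :: mat where "N = (\<lambda>i j'. if j' = j then W i k else 0)"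
  define d :: "mat \<times> mat" where "d = ((\<lambda>i k. 0), E)"
  have "(W, X) \<in> consC p n q" using stat by (simp add: d_stationary_def)
  hence "d \<in> feas_cone (consC p n q) (W, X)"
    using \<open>X k j > 0\<close>
    by (auto simp: feas_cone_def consC_def zstep_def d_def E_def intro!: exI[of _ "X k j"])
  moreover have "objF p n q A \<eta>1 \<eta>2 \<gamma> (zstep (W, X) s d) - objF p n q A \<eta>1 \<eta>2 \<gamma> (W, X)
      = s * (((\<Sum>i<p. (A i j - matmul n W X i j) * W i k) - \<eta>2 * X k j - \<gamma>)
             + s * (((\<Sum>i<p. (W i k)\<^sup>2) + \<eta>2) / 2))"
    if "0 < s" "s < X k j" for s
  proof -
    have column: "(\<lambda>k'. X k' j' + s * E k' j')
        = (if j' = j then (\<lambda>k'. X k' j)(k := X k j - s) else (\<lambda>k'. X k' j'))" for j'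
      by (auto simp: E_def)
    have "T1n1 n ((\<lambda>k'. X k' j)(k := X k j - s)) = T1n1 n (\<lambda>k'. X k' j) - s"
      by (rule T1n1_decrease_nonmax) (use assms(3-6) that in auto)
    hence "(\<Sum>j'<q. T1n1 n (\<lambda>k'. X k' j' + s * E k' j'))
        = (\<Sum>j'<q. T1n1 n (\<lambda>k'. X k' j') - (if j' = j then s else 0))"
      by (intro sum.cong refl) (simp add: column)
    also have "\<dots> = (\<Sum>j'<q. T1n1 n (\<lambda>k'. X k' j')) - s"
      using assms(2) by (simp add: sum_subtractf)
    finally have penalty: "(\<Sum>j'<q. T1n1 n (\<lambda>k'. X k' j' + s * E k' j'))
        = (\<Sum>j'<q. T1n1 n (\<lambda>k'. X k' j')) - s" .
    have product: "matmul n W (\<lambda>k j. X k j + s * E k j) i j' = matmul n W X i j' - s * N i j'" for i j'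
      using assms(4)
      by (cases "j' = j")
         (simp_all add: matmul_def E_def N_def algebra_simps sum.distrib if_distrib[of "(*) _"]
           cong: if_cong)
    have "frob_inner n q X E = - X k j" "(frob n q E)\<^sup>2 = 1"
      using assms(2,4) unfolding E_def
      by (simp_all add: frob_inner_column frob_sq_column if_distrib[of "(*) _"]
            if_distrib[of "\<lambda>x. x\<^sup>2"] cong: if_cong)
    moreover have
      "frob_inner p q (\<lambda>i j. A i j - matmul n W X i j) N = (\<Sum>i<p. (A i j - matmul n W X i j) * W i k)"
      "(frob p q N)\<^sup>2 = (\<Sum>i<p. (W i k)\<^sup>2)"
      using assms(2) unfolding N_def by (simp_all add: frob_inner_column frob_sq_column)
    ultimately show ?thesis
      unfolding d_def
      by (subst objF_zstep[where N = N]) (simp_all add: product penalty algebra_simps)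
  qed
  ultimately have "0 \<le> (\<Sum>i<p. (A i j - matmul n W X i j) * W i k) - \<eta>2 * X k j - \<gamma>"
    by (intro d_stationary_first_order[OF stat, where d = d and e = "X k j"
          and b = "((\<Sum>i<p. (W i k)\<^sup>2) + \<eta>2) / 2"]) (use assms(7) in auto)
  thus ?thesis by simp
qed

lemma d_stationary_column_bound:
  assumes "\<eta>1 > 0" "\<eta>2 \<ge> 0"
    and stat: "d_stationary (objF p n q A \<eta>1 \<eta>2 \<gamma>) (consC p n q) (W, X)"
    and "j < q" "T1n1 n (\<lambda>k. X k j) \<noteq> 0"
  shows "\<gamma> \<le> colnorm p A j * (frob p q A / (2 * sqrt \<eta>1))"
proof -
  obtain m k where mk: "m < n" "k < n" "m \<noteq> k"
    "\<bar>X m j\<bar> = Max ((\<lambda>i. \<bar>X i j\<bar>) ` {..<n})" "X k j \<noteq> 0"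
    using T1n1_nonzero_obtain[OF assms(5)] .
  have "(W, X) \<in> consC p n q" using stat by (simp add: d_stationary_def)
  hence W_nonneg: "\<And>i k. i < p \<Longrightarrow> k < n \<Longrightarrow> W i k \<ge> 0"
    and X_nonneg: "\<And>k j. k < n \<Longrightarrow> j < q \<Longrightarrow> X k j \<ge> 0"
    by (auto simp: consC_def)
  have "X k j > 0" using X_nonneg[OF mk(2) assms(4)] mk(5) by simp
  have "\<gamma> \<le> \<gamma> + \<eta>2 * X k j" using assms(2) \<open>X k j > 0\<close> by simp
  also have "\<dots> \<le> (\<Sum>i<p. (A i j - matmul n W X i j) * W i k)"
    using d_stationary_lower_entry[OF stat assms(4) mk(1-4) \<open>X k j > 0\<close>] .
  also have "\<dots> \<le> (\<Sum>i<p. A i j * W i k)"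
  proof (intro sum_mono)
    fix i assume "i \<in> {..<p}"
    hence "matmul n W X i j \<ge> 0" "W i k \<ge> 0"
      using W_nonneg X_nonneg assms(4) mk(2) by (auto simp: matmul_def intro!: sum_nonneg)
    thus "(A i j - matmul n W X i j) * W i k \<le> A i j * W i k"
      by (simp add: algebra_simps)
  qed
  also have "\<dots> \<le> colnorm p A j * colnorm p W k"
    by (rule sum_mult_le_colnorm)
  also have "\<dots> \<le> colnorm p A j * (frob p q A / (2 * sqrt \<eta>1))"
    using colnorm_le_frob[OF mk(2), of p W] d_stationary_frob_W_le[OF assms(1) stat]
    by (intro mult_left_mono) (auto simp: colnorm_def sum_nonneg)
  finally show ?thesis .
qed

lemma mult_half_le_div_sqrt2:
  fixes a b c :: real
  assumes nonneg: "0 \<le> c" "0 \<le> a" "0 \<le> b"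
  shows "c * (a / 2) \<le> c / sqrt 2 * (a + b)"
proof -
  have "sqrt 2 \<le> 2" using real_sqrt_le_iff[of 2 4] by simp
  hence "a / 2 \<le> a / sqrt 2" using nonneg(2) by (intro divide_left_mono) auto
  also have "\<dots> \<le> (a + b) / sqrt 2" using nonneg(3) by (simp add: divide_right_mono)
  finally have "c * (a / 2) \<le> c * ((a + b) / sqrt 2)"
    using nonneg(1) by (rule mult_left_mono)
  thus ?thesis by simp
qed

theorem mainTheorem12:
  fixes p n q :: nat and A W X :: mat and \<eta>1 \<eta>2 \<gamma> :: real
  assumes A_nonneg: "\<forall>i<p. \<forall>j<q. A i j \<ge> 0"
    and eta1: "\<eta>1 > 0" and eta2: "\<eta>2 > 0" and gam: "\<gamma> > 0"
    and stat: "d_stationary (objF p n q A \<eta>1 \<eta>2 \<gamma>) (consC p n q) (W, X)"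
    and gam_big: "\<forall>j<q. \<gamma> > colnorm p A j / sqrt 2 * (frob p q A / sqrt \<eta>1 + sqrt \<eta>2)"
  shows "\<forall>j<q. T1n1 n (\<lambda>k. X k j) = 0"
proof (intro allI impI, rule ccontr)
  fix j assume "j < q" "T1n1 n (\<lambda>k. X k j) \<noteq> 0"
  hence "\<gamma> \<le> colnorm p A j * (frob p q A / sqrt \<eta>1 / 2)"
    using d_stationary_column_bound[OF eta1 less_imp_le[OF eta2] stat] by (simp add: ac_simps)
  also have "\<dots> \<le> colnorm p A j / sqrt 2 * (frob p q A / sqrt \<eta>1 + sqrt \<eta>2)"
    using eta1 eta2 by (intro mult_half_le_div_sqrt2) (auto simp: colnorm_def frob_def sum_nonneg)
  finally show False using gam_big \<open>j < q\<close> by (meson not_less)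
qed

end
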